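(* Let $f=p/q$ be a rational function with $p,q$ of degree $l$, positive on the standard simplex $\Delta$, with $b_\alpha(q,j,\Delta)>0$ for all $|\alpha|=j$, $j\ge l$. Then there exists $k\ge l$ such that $\min_{|\alpha|=k} b_\alpha(f,k,\Delta)>0$.
   Context: $\Delta$ is the standard simplex in $\mathbb{R}^n$ with barycentric coordinates $\lambda=(1-\sum x_i,x_1,\dots,x_n)$; $B^{(k)}_\alpha=\frac{k!}{\alpha_0!\cdots\alpha_n!}\lambda^\alpha$ ($\alpha\in\mathbb{N}^{n+1}$, $|\alpha|=k$) are the Bernstein polynomials of degree $k$; $b_\alpha(p,k,\Delta)$ denote the coefficients of $p$ in this basis and $b_\alpha(f,k,\Delta)=b_\alpha(p,k,\Delta)/b_\alpha(q,k,\Delta)$ are the rational Bernstein coefficients. *)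

theory Defs
  imports Complex_Main
begin

text \<open>Points of R^n are encoded as functions x :: nat => real, the coordinates
  being x 1, ..., x n (other values are ignored).  Multi-indices alpha for the
  Bernstein basis are functions nat => nat supported on {0..n}.\<close>

definition monomial_exps :: "nat \<Rightarrow> nat \<Rightarrow> (nat \<Rightarrow> nat) set" where
  "monomial_exps n l = {\<beta>. (\<forall>i. i \<notin> {1..n} \<longrightarrow> \<beta> i = 0) \<and> (\<Sum>i=1..n. \<beta> i) \<le> l}"

definition poly_deg_le :: "nat \<Rightarrow> nat \<Rightarrow> ((nat \<Rightarrow> real) \<Rightarrow> real) \<Rightarrow> bool" where
  "poly_deg_le n l p \<longleftrightarrow>
     (\<exists>c :: (nat \<Rightarrow> nat) \<Rightarrow> real. \<forall>x. p x = (\<Sum>\<beta>\<in>monomial_exps n l. c \<beta> * (\<Prod>i=1..n. x i ^ \<beta> i)))"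

definition std_simplex :: "nat \<Rightarrow> (nat \<Rightarrow> real) set" where
  "std_simplex n = {x. (\<forall>i\<in>{1..n}. 0 \<le> x i) \<and> (\<Sum>i=1..n. x i) \<le> 1}"

definition bary :: "nat \<Rightarrow> (nat \<Rightarrow> real) \<Rightarrow> nat \<Rightarrow> real" where
  "bary n x i = (if i = 0 then 1 - (\<Sum>j=1..n. x j) else x i)"

definition multi_idx :: "nat \<Rightarrow> nat \<Rightarrow> (nat \<Rightarrow> nat) set" where
  "multi_idx n k = {\<alpha>. (\<forall>i>n. \<alpha> i = 0) \<and> (\<Sum>i=0..n. \<alpha> i) = k}"

definition bernstein :: "nat \<Rightarrow> nat \<Rightarrow> (nat \<Rightarrow> nat) \<Rightarrow> (nat \<Rightarrow> real) \<Rightarrow> real" where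
  "bernstein n k \<alpha> x =
     fact k / (\<Prod>i=0..n. fact (\<alpha> i)) * (\<Prod>i=0..n. bary n x i ^ \<alpha> i)"

definition bernstein_coeffs :: "nat \<Rightarrow> nat \<Rightarrow> ((nat \<Rightarrow> real) \<Rightarrow> real) \<Rightarrow> (nat \<Rightarrow> nat) \<Rightarrow> real" where
  "bernstein_coeffs n k p =
     (THE b. (\<forall>\<alpha>. \<alpha> \<notin> multi_idx n k \<longrightarrow> b \<alpha> = 0) \<and>
             (\<forall>x. p x = (\<Sum>\<alpha>\<in>multi_idx n k. b \<alpha> * bernstein n k \<alpha> x)))"

definition rat_bernstein_coeffs ::
  "nat \<Rightarrow> nat \<Rightarrow> ((nat \<Rightarrow> real) \<Rightarrow> real) \<Rightarrow> ((nat \<Rightarrow> real) \<Rightarrow> real) \<Rightarrow> (nat \<Rightarrow> nat) \<Rightarrow> real" where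
  "rat_bernstein_coeffs n k p q \<alpha> = bernstein_coeffs n k p \<alpha> / bernstein_coeffs n k q \<alpha>"

end

theory Submission
  imports Defs "HOL-Analysis.Analysis"
begin

text \<open>Repeated degree elevation shows that the degree-\<open>k\<close> Bernstein coefficient at \<open>\<alpha>\<close> of
  a monomial \<open>x^\<beta>\<close> is the ratio of falling factorials \<open>\<Prod>\<^sub>i (\<alpha>\<^sub>i)\<^sub>\<beta>\<^sub>i / (k)\<^sub>|\<^sub>\<beta>\<^sub>|\<close>, which
  differs from \<open>(\<alpha>/k)^\<beta>\<close> by \<open>O(|\<beta>|\<^sup>2/k)\<close>. Hence \<open>b\<^sub>\<alpha>(p,k) = p(\<alpha>/k) + O(1/k)\<close>.
  Since \<open>q\<close> has positive Bernstein coefficients it is positive on the simplex, so \<open>p = f q\<close> is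
  positive there and, by compactness, bounded below by some \<open>\<delta> > 0\<close>; therefore \<open>b\<^sub>\<alpha>(p,k) > 0\<close>
  for all large \<open>k\<close>, while \<open>b\<^sub>\<alpha>(q,k) > 0\<close> by hypothesis. Identifying these coefficients with
  \<^const>\<open>bernstein_coeffs\<close> needs the linear independence of the Bernstein basis, which reduces
  to that of monomials by homogenization.\<close>

section \<open>Bernstein expansions and degree elevation\<close>

lemma finite_multi_idx: "finite (multi_idx n k)"
proof -
  have "multi_idx n k \<subseteq> (\<lambda>f i. if i \<le> n then f i else 0) ` PiE {0..n} (\<lambda>_. {0..k})"
  proof
    fix \<alpha> assume \<alpha>: "\<alpha> \<in> multi_idx n k"
    then have "\<alpha> i \<le> k" if "i \<le> n" for i
      using member_le_sum[of i "{0..n}" \<alpha>] that by (auto simp: multi_idx_def)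
    moreover have "\<alpha> = (\<lambda>i. if i \<le> n then restrict \<alpha> {0..n} i else 0)"
      using \<alpha> by (auto simp: multi_idx_def fun_eq_iff)
    ultimately show "\<alpha> \<in> (\<lambda>f i. if i \<le> n then f i else 0) ` PiE {0..n} (\<lambda>_. {0..k})"
      by (intro image_eqI[of _ _ "restrict \<alpha> {0..n}"]) auto
  qed
  then show ?thesis
    by (rule finite_subset) (auto intro!: finite_PiE)
qed

lemma multi_idx_le:
  assumes "\<alpha> \<in> multi_idx n k"
  shows "\<alpha> i \<le> k"
  using assms member_le_sum[of i "{0..n}" \<alpha>] by (cases "i \<le> n") (auto simp: multi_idx_def)

lemma multi_idx_nonempty: "multi_idx n k \<noteq> {}"
proof -
  have "(\<lambda>i. if i = 0 then k else 0) \<in> multi_idx n k"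
    by (simp add: multi_idx_def sum.delta)
  then show ?thesis by blast
qed

lemma sum_bary: "(\<Sum>i=0..n. bary n x i) = 1"
proof -
  have "(\<Sum>i=0..n. bary n x i) = bary n x 0 + (\<Sum>i=1..n. bary n x i)"
    by (simp add: sum.atLeast_Suc_atMost)
  also have "(\<Sum>i=1..n. bary n x i) = (\<Sum>i=1..n. x i)"
    by (rule sum.cong) (auto simp: bary_def)
  finally show ?thesis by (simp add: bary_def)
qed

lemma prod_fun_upd_remove:
  assumes "finite A" "i \<in> A"
  shows "(\<Prod>j\<in>A. g j ((\<alpha>(i := v)) j)) = g i v * (\<Prod>j\<in>A - {i}. g j (\<alpha> j))"
proof -
  have "(\<Prod>j\<in>A. g j ((\<alpha>(i := v)) j)) = g i v * (\<Prod>j\<in>A - {i}. g j ((\<alpha>(i := v)) j))"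
    using prod.remove[OF assms, of "\<lambda>j. g j ((\<alpha>(i := v)) j)"] by (simp only: fun_upd_same)
  also have "(\<Prod>j\<in>A - {i}. g j ((\<alpha>(i := v)) j)) = (\<Prod>j\<in>A - {i}. g j (\<alpha> j))"
    by (rule prod.cong) auto
  finally show ?thesis .
qed

lemma bernstein_times_bary:
  assumes "i \<le> n"
  shows "bernstein n k \<alpha> x * bary n x i =
    (real (\<alpha> i) + 1) / (real k + 1) * bernstein n (Suc k) (\<alpha>(i := Suc (\<alpha> i))) x"
proof -
  have i: "i \<in> {0..n}" using assms by simp
  define F where "F = (\<Prod>j\<in>{0..n} - {i}. fact (\<alpha> j) :: real)"
  define P where "P = (\<Prod>j\<in>{0..n} - {i}. bary n x j ^ \<alpha> j)"
  have "(\<Prod>j=0..n. fact (\<alpha> j) :: real) = fact (\<alpha> i) * F"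
    and "(\<Prod>j=0..n. bary n x j ^ \<alpha> j) = bary n x i ^ \<alpha> i * P"
    using prod.remove[OF _ i] unfolding F_def P_def by auto
  moreover have "(\<Prod>j=0..n. fact ((\<alpha>(i := Suc (\<alpha> i))) j) :: real) = fact (Suc (\<alpha> i)) * F"
    and "(\<Prod>j=0..n. bary n x j ^ (\<alpha>(i := Suc (\<alpha> i))) j) = bary n x i ^ Suc (\<alpha> i) * P"
    using prod_fun_upd_remove[OF _ i, of "\<lambda>j v. fact v :: real"]
      prod_fun_upd_remove[OF _ i, of "\<lambda>j v. bary n x j ^ v"]
    unfolding F_def P_def by auto
  moreover have "F \<noteq> 0" by (simp add: F_def)
  moreover have "real k + 1 \<noteq> 0" "real (\<alpha> i) + 1 \<noteq> 0" by linarith+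
  ultimately show ?thesis
    unfolding bernstein_def by (simp add: divide_simps ac_simps)
qed

lemma sum_fun_upd_remove:
  assumes "finite A" "i \<in> A"
  shows "(\<Sum>j\<in>A. (\<alpha>(i := v)) j) = v + (\<Sum>j\<in>A - {i}. \<alpha> j)"
proof -
  have "(\<Sum>j\<in>A. (\<alpha>(i := v)) j) = v + (\<Sum>j\<in>A - {i}. (\<alpha>(i := v)) j)"
    using sum.remove[OF assms, of "\<alpha>(i := v)"] by simp
  also have "(\<Sum>j\<in>A - {i}. (\<alpha>(i := v)) j) = (\<Sum>j\<in>A - {i}. \<alpha> j)"
    by (rule sum.cong) auto
  finally show ?thesis .
qed

lemma multi_idx_incr:
  assumes "\<alpha> \<in> multi_idx n k" "i \<le> n"
  shows "\<alpha>(i := Suc (\<alpha> i)) \<in> multi_idx n (Suc k)"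
  using assms sum_fun_upd_remove[of "{0..n}" i \<alpha> "Suc (\<alpha> i)"] sum.remove[of "{0..n}" i \<alpha>]
  by (auto simp: multi_idx_def)

lemma multi_idx_decr:
  assumes "\<gamma> \<in> multi_idx n (Suc k)" "i \<le> n" "0 < \<gamma> i"
  shows "\<gamma>(i := \<gamma> i - 1) \<in> multi_idx n k"
  using assms sum_fun_upd_remove[of "{0..n}" i \<gamma> "\<gamma> i - 1"] sum.remove[of "{0..n}" i \<gamma>]
  by (auto simp: multi_idx_def)

lemma sum_multi_idx_incr:
  assumes "i \<le> n"
  shows "(\<Sum>\<alpha>\<in>multi_idx n k. h (\<alpha>(i := Suc (\<alpha> i)))) = (\<Sum>\<gamma>\<in>{\<gamma>\<in>multi_idx n (Suc k). 0 < \<gamma> i}. h \<gamma>)"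
  by (rule sum.reindex_bij_witness[where i = "\<lambda>\<gamma>. \<gamma>(i := \<gamma> i - 1)" and j = "\<lambda>\<alpha>. \<alpha>(i := Suc (\<alpha> i))"])
    (auto simp: assms multi_idx_incr multi_idx_decr[simplified])

definition has_bernstein_coeffs ::
  "nat \<Rightarrow> nat \<Rightarrow> ((nat \<Rightarrow> nat) \<Rightarrow> real) \<Rightarrow> ((nat \<Rightarrow> real) \<Rightarrow> real) \<Rightarrow> bool" where
  "has_bernstein_coeffs n k b F \<longleftrightarrow> (\<forall>x. F x = (\<Sum>\<alpha>\<in>multi_idx n k. b \<alpha> * bernstein n k \<alpha> x))"

lemma has_bernstein_coeffs_cong:
  "has_bernstein_coeffs n k b F \<Longrightarrow> (\<And>\<alpha>. \<alpha> \<in> multi_idx n k \<Longrightarrow> b \<alpha> = b' \<alpha>) \<Longrightarrow>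
    has_bernstein_coeffs n k b' F"
  unfolding has_bernstein_coeffs_def by (metis (no_types, lifting) sum.cong)

text \<open>For \<open>\<alpha> i = 0\<close> the index \<open>\<alpha> i - 1\<close> is truncated to \<open>0\<close>,
  but that summand carries the factor \<open>\<alpha> i = 0\<close>.\<close>
definition elevate_coeffs :: "nat \<Rightarrow> nat \<Rightarrow> ((nat \<Rightarrow> nat) \<Rightarrow> real) \<Rightarrow> (nat \<Rightarrow> nat) \<Rightarrow> real" where
  "elevate_coeffs n k b \<alpha> = (\<Sum>i=0..n. real (\<alpha> i) / (real k + 1) * b (\<alpha>(i := \<alpha> i - 1)))"

lemma has_bernstein_coeffs_elevate:
  assumes "has_bernstein_coeffs n k b F"
  shows "has_bernstein_coeffs n (Suc k) (elevate_coeffs n k b) F"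
  unfolding has_bernstein_coeffs_def
proof
  fix x
  define B where "B \<gamma> = bernstein n (Suc k) \<gamma> x" for \<gamma>
  define T where "T i \<gamma> = real (\<gamma> i) / (real k + 1) * b (\<gamma>(i := \<gamma> i - 1)) * B \<gamma>" for i \<gamma>
  have "F x = (\<Sum>\<alpha>\<in>multi_idx n k. b \<alpha> * bernstein n k \<alpha> x) * (\<Sum>i=0..n. bary n x i)"
    using assms by (simp add: has_bernstein_coeffs_def sum_bary)
  also have "\<dots> = (\<Sum>i=0..n. \<Sum>\<alpha>\<in>multi_idx n k. b \<alpha> * (bernstein n k \<alpha> x * bary n x i))"
    unfolding sum_distrib_left sum_distrib_right mult.assoc by simp
  also have "\<dots> = (\<Sum>i=0..n. \<Sum>\<alpha>\<in>multi_idx n k. T i (\<alpha>(i := Suc (\<alpha> i))))"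
    by (intro sum.cong refl) (simp add: bernstein_times_bary T_def B_def)
  also have "\<dots> = (\<Sum>i=0..n. \<Sum>\<gamma>\<in>{\<gamma>\<in>multi_idx n (Suc k). 0 < \<gamma> i}. T i \<gamma>)"
    by (intro sum.cong refl sum_multi_idx_incr) simp
  also have "\<dots> = (\<Sum>i=0..n. \<Sum>\<gamma>\<in>multi_idx n (Suc k). T i \<gamma>)"
    by (intro sum.cong refl sum.mono_neutral_left) (auto simp: finite_multi_idx T_def)
  also have "\<dots> = (\<Sum>\<gamma>\<in>multi_idx n (Suc k). elevate_coeffs n k b \<gamma> * B \<gamma>)"
    unfolding elevate_coeffs_def sum_distrib_right T_def by (rule sum.swap)
  finally show "F x = (\<Sum>\<gamma>\<in>multi_idx n (Suc k). elevate_coeffs n k b \<gamma> * bernstein n (Suc k) \<gamma> x)"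
    by (simp add: B_def)
qed

section \<open>Bernstein coefficients of monomials\<close>

definition falling_fact :: "nat \<Rightarrow> nat \<Rightarrow> real" where
  "falling_fact a g = (\<Prod>s<g. real a - real s)"

lemma falling_fact_0 [simp]: "falling_fact a 0 = 1"
  by (simp add: falling_fact_def)

lemma falling_fact_Suc: "falling_fact a (Suc g) = falling_fact a g * (real a - real g)"
  by (simp add: falling_fact_def)

lemma falling_fact_Suc': "falling_fact a (Suc g) = real a * falling_fact (a - 1) g"
proof (cases a)
  case 0
  then show ?thesis by (auto simp: falling_fact_def prod.lessThan_Suc_shift)
next
  case (Suc a')
  have "falling_fact a (Suc g) = real a * (\<Prod>s<g. real a - real (Suc s))"
    unfolding falling_fact_def by (subst prod.lessThan_Suc_shift) simp
  also have "(\<Prod>s<g. real a - real (Suc s)) = falling_fact (a - 1) g"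
    unfolding falling_fact_def Suc by (auto intro: prod.cong)
  finally show ?thesis .
qed

lemma falling_fact_eq_0: "a < g \<Longrightarrow> falling_fact a g = 0"
  unfolding falling_fact_def by (intro prod_zero) (auto intro!: bexI[of _ a])

lemma falling_fact_self: "falling_fact a a = fact a"
  by (induction a) (simp_all add: falling_fact_Suc')

definition monomial_bernstein_coeff :: "nat \<Rightarrow> (nat \<Rightarrow> nat) \<Rightarrow> nat \<Rightarrow> (nat \<Rightarrow> nat) \<Rightarrow> real" where
  "monomial_bernstein_coeff n \<beta> k \<alpha> =
     (\<Prod>i=0..n. falling_fact (\<alpha> i) (\<beta> i)) / falling_fact k (\<Sum>i=0..n. \<beta> i)"

lemma elevate_monomial_bernstein_coeff:
  assumes "\<alpha> \<in> multi_idx n (Suc k)" "(\<Sum>i=0..n. \<beta> i) \<le> k"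
  shows "elevate_coeffs n k (monomial_bernstein_coeff n \<beta> k) \<alpha> = monomial_bernstein_coeff n \<beta> (Suc k) \<alpha>"
proof -
  define m where "m = (\<Sum>i=0..n. \<beta> i)"
  define P where "P = (\<Prod>j=0..n. falling_fact (\<alpha> j) (\<beta> j))"
  have decr: "real (\<alpha> i) * (\<Prod>j=0..n. falling_fact ((\<alpha>(i := \<alpha> i - 1)) j) (\<beta> j)) =
      (real (\<alpha> i) - real (\<beta> i)) * P" if i: "i \<in> {0..n}" for i
  proof -
    define R where "R = (\<Prod>j\<in>{0..n} - {i}. falling_fact (\<alpha> j) (\<beta> j))"
    have "(\<Prod>j=0..n. falling_fact ((\<alpha>(i := \<alpha> i - 1)) j) (\<beta> j)) = falling_fact (\<alpha> i - 1) (\<beta> i) * R"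
      using prod_fun_upd_remove[OF _ i, of "\<lambda>j v. falling_fact v (\<beta> j)"] by (simp add: R_def)
    moreover have "P = falling_fact (\<alpha> i) (\<beta> i) * R"
      using prod.remove[OF _ i] by (simp add: P_def R_def)
    moreover have "real (\<alpha> i) * falling_fact (\<alpha> i - 1) (\<beta> i) = (real (\<alpha> i) - real (\<beta> i)) * falling_fact (\<alpha> i) (\<beta> i)"
      using falling_fact_Suc[of "\<alpha> i" "\<beta> i"] falling_fact_Suc'[of "\<alpha> i" "\<beta> i"] by simp
    ultimately show ?thesis by (simp add: mult.assoc[symmetric])
  qed
  have "m \<le> k"
    using assms(2) by (simp add: m_def)
  have "elevate_coeffs n k (monomial_bernstein_coeff n \<beta> k) \<alpha> =
      (\<Sum>i=0..n. real (\<alpha> i) * (\<Prod>j=0..n. falling_fact ((\<alpha>(i := \<alpha> i - 1)) j) (\<beta> j))) /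
      ((real k + 1) * falling_fact k m)"
    unfolding elevate_coeffs_def monomial_bernstein_coeff_def sum_divide_distrib m_def
    by (intro sum.cong refl) simp
  also have "\<dots> = (\<Sum>i=0..n. (real (\<alpha> i) - real (\<beta> i)) * P) / ((real k + 1) * falling_fact k m)"
    using decr by simp
  also have "(\<Sum>i=0..n. (real (\<alpha> i) - real (\<beta> i)) * P) = (real (Suc k) - real m) * P"
    using assms(1) unfolding sum_distrib_right[symmetric]
    by (simp add: sum_subtractf m_def multi_idx_def flip: of_nat_sum)
  also have "(real k + 1) * falling_fact k m = (real (Suc k) - real m) * falling_fact (Suc k) m"
    using falling_fact_Suc[of "Suc k" m] falling_fact_Suc'[of "Suc k" m] by (simp add: mult.commute add.commute)
  also have "(real (Suc k) - real m) * P / ((real (Suc k) - real m) * falling_fact (Suc k) m) =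
      P / falling_fact (Suc k) m" using \<open>m \<le> k\<close> by simp
  finally show ?thesis
    unfolding monomial_bernstein_coeff_def P_def m_def .
qed

lemma monomial_bernstein_coeff_eq_0:
  assumes "\<alpha> \<in> multi_idx n (\<Sum>i=0..n. \<beta> i)" "\<forall>i>n. \<beta> i = 0" "\<alpha> \<noteq> \<beta>"
  shows "monomial_bernstein_coeff n \<beta> (\<Sum>i=0..n. \<beta> i) \<alpha> = 0"
proof -
  have "\<exists>i\<in>{0..n}. \<alpha> i < \<beta> i"
  proof (rule ccontr)
    assume "\<not> ?thesis"
    then have le: "\<And>i. i \<in> {0..n} \<Longrightarrow> \<beta> i \<le> \<alpha> i"
      by (auto simp: not_less)
    have eq: "sum \<beta> {0..n} = sum \<alpha> {0..n}"
      using assms(1) by (simp add: multi_idx_def)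
    have "\<alpha> i = \<beta> i" for i
    proof (cases "i \<le> n")
      case True
      then show ?thesis using sum_mono_inv[OF eq le, of i] by simp
    qed (use assms(1,2) in \<open>auto simp: multi_idx_def\<close>)
    then have "\<alpha> = \<beta>" ..
    with assms(3) show False ..
  qed
  then have "(\<Prod>i=0..n. falling_fact (\<alpha> i) (\<beta> i)) = 0"
    by (auto intro!: prod_zero falling_fact_eq_0)
  then show ?thesis
    by (simp add: monomial_bernstein_coeff_def)
qed

lemma has_bernstein_coeffs_monomial:
  assumes "\<beta> 0 = 0" "\<forall>i>n. \<beta> i = 0" "(\<Sum>i=0..n. \<beta> i) \<le> k"
  shows "has_bernstein_coeffs n k (monomial_bernstein_coeff n \<beta> k) (\<lambda>x. \<Prod>i=1..n. x i ^ \<beta> i)"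
  using assms(3)
proof (induction k rule: dec_induct)
  case base
  define m where "m = (\<Sum>i=0..n. \<beta> i)"
  have \<beta>: "\<beta> \<in> multi_idx n m"
    using assms(2) by (simp add: m_def multi_idx_def)
  show ?case
    unfolding has_bernstein_coeffs_def m_def[symmetric]
  proof
    fix x
    have "(\<Sum>\<alpha>\<in>multi_idx n m. monomial_bernstein_coeff n \<beta> m \<alpha> * bernstein n m \<alpha> x) =
        monomial_bernstein_coeff n \<beta> m \<beta> * bernstein n m \<beta> x"
      using monomial_bernstein_coeff_eq_0[OF _ assms(2)]
      by (subst sum.remove[OF finite_multi_idx \<beta>]) (auto simp: m_def intro!: sum.neutral)
    also have "\<dots> = (\<Prod>i=0..n. bary n x i ^ \<beta> i)"
      by (simp add: monomial_bernstein_coeff_def bernstein_def falling_fact_self m_def)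
    also have "\<dots> = (\<Prod>i=1..n. x i ^ \<beta> i)"
      using assms(1) by (simp add: prod.atLeast_Suc_atMost bary_def)
    finally show "(\<Prod>i=1..n. x i ^ \<beta> i) =
        (\<Sum>\<alpha>\<in>multi_idx n m. monomial_bernstein_coeff n \<beta> m \<alpha> * bernstein n m \<alpha> x)" ..
  qed
next
  case (step k)
  then show ?case
    by (auto intro: has_bernstein_coeffs_cong[OF has_bernstein_coeffs_elevate]
        elevate_monomial_bernstein_coeff)
qed

lemma sum_bernstein: "(\<Sum>\<alpha>\<in>multi_idx n k. bernstein n k \<alpha> x) = 1"
  using has_bernstein_coeffs_monomial[of "\<lambda>_. 0" n k]
  by (simp add: has_bernstein_coeffs_def monomial_bernstein_coeff_def)

lemma bernstein_nonneg:
  assumes "x \<in> std_simplex n"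
  shows "bernstein n k \<alpha> x \<ge> 0"
proof -
  have "bary n x i \<ge> 0" if "i \<in> {0..n}" for i
    using assms that by (auto simp: std_simplex_def bary_def)
  then show ?thesis
    unfolding bernstein_def by (intro mult_nonneg_nonneg divide_nonneg_nonneg prod_nonneg) auto
qed

lemma monomial_exps_D:
  assumes "\<beta> \<in> monomial_exps n l"
  shows "\<beta> 0 = 0" "\<forall>i>n. \<beta> i = 0" "(\<Sum>i=0..n. \<beta> i) \<le> l"
  using assms by (auto simp: monomial_exps_def sum.atLeast_Suc_atMost)

lemma has_bernstein_coeffs_poly:
  assumes "\<And>x. p x = (\<Sum>\<beta>\<in>monomial_exps n l. c \<beta> * (\<Prod>i=1..n. x i ^ \<beta> i))" "l \<le> k"
  shows "has_bernstein_coeffs n k (\<lambda>\<alpha>. \<Sum>\<beta>\<in>monomial_exps n l. c \<beta> * monomial_bernstein_coeff n \<beta> k \<alpha>) p"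
  unfolding has_bernstein_coeffs_def
proof
  fix x
  have "has_bernstein_coeffs n k (monomial_bernstein_coeff n \<beta> k) (\<lambda>x. \<Prod>i=1..n. x i ^ \<beta> i)"
    if "\<beta> \<in> monomial_exps n l" for \<beta>
    using monomial_exps_D[OF that] assms(2) by (intro has_bernstein_coeffs_monomial) auto
  then have "p x = (\<Sum>\<beta>\<in>monomial_exps n l. c \<beta> *
      (\<Sum>\<alpha>\<in>multi_idx n k. monomial_bernstein_coeff n \<beta> k \<alpha> * bernstein n k \<alpha> x))"
    unfolding assms(1) by (intro sum.cong refl) (simp add: has_bernstein_coeffs_def)
  then show "p x = (\<Sum>\<alpha>\<in>multi_idx n k.
      (\<Sum>\<beta>\<in>monomial_exps n l. c \<beta> * monomial_bernstein_coeff n \<beta> k \<alpha>) * bernstein n k \<alpha> x)"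
    by (simp add: sum_distrib_left sum_distrib_right mult.assoc sum.swap[of _ "multi_idx n k"])
qed

section \<open>Uniqueness of Bernstein coefficients\<close>

lemma monomials_independent:
  fixes b :: "(nat \<Rightarrow> nat) \<Rightarrow> real"
  assumes "finite A" "inj_on (\<lambda>\<alpha>. restrict \<alpha> {..<m}) A"
    and "\<And>y. (\<Sum>\<alpha>\<in>A. b \<alpha> * (\<Prod>i<m. y i ^ \<alpha> i)) = 0" and "\<alpha> \<in> A"
  shows "b \<alpha> = 0"
  using assms
proof (induction m arbitrary: A \<alpha>)
  case 0
  then have "A = {\<alpha>}"
    by (auto simp: inj_on_def)
  with "0.prems"(3) show ?case by simp
next
  case (Suc m)
  define S where "S j = {\<gamma>\<in>A. \<gamma> m = j}" for j
  define d where "d = Max ((\<lambda>\<gamma>. \<gamma> m) ` A)"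
  have "\<alpha> m \<le> d"
    using Suc.prems(1,4) by (simp add: d_def)
  have coeff_0: "(\<Sum>\<gamma>\<in>S j. b \<gamma> * (\<Prod>i<m. y i ^ \<gamma> i)) = 0" if "j \<le> d" for j y
  proof -
    have "(\<Sum>j\<le>d. (\<Sum>\<gamma>\<in>S j. b \<gamma> * (\<Prod>i<m. y i ^ \<gamma> i)) * t ^ j) = 0" for t
    proof -
      have last_var: "(\<Prod>i<Suc m. (y(m := t)) i ^ \<gamma> i) = (\<Prod>i<m. y i ^ \<gamma> i) * t ^ \<gamma> m" for \<gamma>
      proof -
        have "(\<Prod>i<m. (y(m := t)) i ^ \<gamma> i) = (\<Prod>i<m. y i ^ \<gamma> i)"
          by (rule prod.cong) auto
        then show ?thesis by simp
      qed
      have "(\<Sum>j\<le>d. (\<Sum>\<gamma>\<in>S j. b \<gamma> * (\<Prod>i<m. y i ^ \<gamma> i)) * t ^ j) =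
          (\<Sum>j\<le>d. \<Sum>\<gamma>\<in>S j. b \<gamma> * (\<Prod>i<Suc m. (y(m := t)) i ^ \<gamma> i))"
        unfolding sum_distrib_right S_def last_var by (intro sum.cong refl) (simp add: mult.assoc)
      also have "\<dots> = (\<Sum>\<gamma>\<in>A. b \<gamma> * (\<Prod>i<Suc m. (y(m := t)) i ^ \<gamma> i))"
        unfolding S_def using Suc.prems(1) by (intro sum.group) (auto simp: d_def)
      also have "\<dots> = 0"
        by (rule Suc.prems(3))
      finally show ?thesis .
    qed
    with that show ?thesis
      using polyfun_eq_0[where n = d and c = "\<lambda>j. \<Sum>\<gamma>\<in>S j. b \<gamma> * (\<Prod>i<m. y i ^ \<gamma> i)"] by blast
  qed
  have inj: "inj_on (\<lambda>\<gamma>. restrict \<gamma> {..<m}) (S (\<alpha> m))"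
  proof (rule inj_onI)
    fix \<gamma> \<gamma>' assume S: "\<gamma> \<in> S (\<alpha> m)" "\<gamma>' \<in> S (\<alpha> m)"
      and eq: "restrict \<gamma> {..<m} = restrict \<gamma>' {..<m}"
    have "restrict \<gamma> {..<Suc m} i = restrict \<gamma>' {..<Suc m} i" for i
      using S fun_cong[OF eq, of i] by (cases "i = m") (auto simp: S_def)
    moreover have "\<gamma> \<in> A" "\<gamma>' \<in> A"
      using S by (simp_all add: S_def)
    ultimately show "\<gamma> = \<gamma>'"
      using inj_onD[OF Suc.prems(2)] by blast
  qed
  have fin: "finite (S (\<alpha> m))" and mem: "\<alpha> \<in> S (\<alpha> m)"
    using Suc.prems(1,4) by (simp_all add: S_def)
  show ?case
    by (rule Suc.IH[OF fin inj coeff_0[OF \<open>\<alpha> m \<le> d\<close>] mem])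
qed

text \<open>Perturbing \<open>y 0\<close> moves the coordinate sum off \<open>0\<close>; continuity in the perturbation
  then gives the identity on the hyperplane \<open>\<Sum>i<m. y i = 0\<close> as well.\<close>
lemma monomial_sum_eq_0_extend:
  fixes b :: "(nat \<Rightarrow> nat) \<Rightarrow> real"
  assumes "\<And>y. (\<Sum>i<m. y i) \<noteq> 0 \<Longrightarrow> (\<Sum>\<alpha>\<in>A. b \<alpha> * (\<Prod>i<m. y i ^ \<alpha> i)) = 0" "0 < m"
  shows "(\<Sum>\<alpha>\<in>A. b \<alpha> * (\<Prod>i<m. y i ^ \<alpha> i)) = 0"
proof -
  define g where "g t = (\<Sum>\<alpha>\<in>A. b \<alpha> * (\<Prod>i<m. (y(0 := y 0 + t)) i ^ \<alpha> i))" for t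
  define c where "c = - (\<Sum>i<m. y i)"
  have "continuous_on S (\<lambda>t. (y(0 := y 0 + t)) i)" for S i
    by (cases "i = 0") (simp_all add: continuous_intros)
  then have "continuous_on (closure (- {c})) g"
    unfolding g_def by (intro continuous_intros)
  moreover have "(\<Sum>i<m. (y(0 := y 0 + t)) i) = t + (\<Sum>i<m. y i)" for t
    using assms(2) sum_fun_upd_remove[of "{..<m}" 0 y "y 0 + t"] sum.remove[of "{..<m}" 0 y] by simp
  then have "g t = 0" if "t \<in> - {c}" for t
    using that assms(1) by (auto simp: g_def c_def)
  moreover have "0 \<in> closure (- {c})"
    by (simp add: closure_interior)
  ultimately have "g 0 = 0"
    by (rule continuous_constant_on_closure)
  then show ?thesis
    by (simp add: g_def)
qed

lemma bernstein_homogenized: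
  assumes "\<alpha> \<in> multi_idx n k" "s = (\<Sum>i<Suc n. y i)" "s \<noteq> 0"
  shows "s ^ k * bernstein n k \<alpha> (\<lambda>i. y i / s) =
    fact k / (\<Prod>i=0..n. fact (\<alpha> i)) * (\<Prod>i<Suc n. y i ^ \<alpha> i)"
proof -
  have "bary n (\<lambda>i. y i / s) i = y i / s" if "i \<le> n" for i
  proof (cases "i = 0")
    case True
    have "s = y 0 + (\<Sum>j=1..n. y j)"
      using assms(2) by (simp add: atLeast0LessThan[symmetric] atLeastLessThanSuc_atLeastAtMost sum.atLeast_Suc_atMost)
    with True assms(3) show ?thesis
      by (simp add: bary_def field_simps flip: sum_divide_distrib)
  qed (simp add: bary_def)
  then have "(\<Prod>i=0..n. bary n (\<lambda>i. y i / s) i ^ \<alpha> i) = (\<Prod>i=0..n. y i ^ \<alpha> i) / (\<Prod>i=0..n. s ^ \<alpha> i)"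
    by (simp add: power_divide prod_dividef)
  also have "(\<Prod>i=0..n. s ^ \<alpha> i) = s ^ k"
    using assms(1) by (simp add: power_sum[symmetric] multi_idx_def)
  finally show ?thesis
    using assms(3) by (simp add: bernstein_def atLeast0AtMost lessThan_Suc_atMost)
qed

lemma bernstein_basis_independent:
  assumes "\<And>x. (\<Sum>\<alpha>\<in>multi_idx n k. d \<alpha> * bernstein n k \<alpha> x) = 0" "\<alpha> \<in> multi_idx n k"
  shows "d \<alpha> = 0"
proof -
  define e where "e \<alpha> = d \<alpha> * (fact k / (\<Prod>i=0..n. fact (\<alpha> i)))" for \<alpha>
  have "(\<Sum>\<alpha>\<in>multi_idx n k. e \<alpha> * (\<Prod>i<Suc n. y i ^ \<alpha> i)) = 0" for y
  proof (rule monomial_sum_eq_0_extend)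
    fix y :: "nat \<Rightarrow> real"
    define s where "s = (\<Sum>i<Suc n. y i)"
    assume "(\<Sum>i<Suc n. y i) \<noteq> 0"
    then have s: "s \<noteq> 0" by (simp add: s_def)
    have "(\<Sum>\<alpha>\<in>multi_idx n k. e \<alpha> * (\<Prod>i<Suc n. y i ^ \<alpha> i)) =
        (\<Sum>\<alpha>\<in>multi_idx n k. d \<alpha> * (s ^ k * bernstein n k \<alpha> (\<lambda>i. y i / s)))"
      by (intro sum.cong refl) (simp add: bernstein_homogenized[OF _ s_def s] e_def)
    also have "\<dots> = s ^ k * (\<Sum>\<alpha>\<in>multi_idx n k. d \<alpha> * bernstein n k \<alpha> (\<lambda>i. y i / s))"
      by (simp add: sum_distrib_left mult.left_commute)
    finally show "(\<Sum>\<alpha>\<in>multi_idx n k. e \<alpha> * (\<Prod>i<Suc n. y i ^ \<alpha> i)) = 0"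
      by (simp add: assms(1))
  qed simp
  moreover have "inj_on (\<lambda>\<alpha>. restrict \<alpha> {..<Suc n}) (multi_idx n k)"
  proof (rule inj_onI)
    fix \<beta> \<gamma> assume idx: "\<beta> \<in> multi_idx n k" "\<gamma> \<in> multi_idx n k"
      and eq: "restrict \<beta> {..<Suc n} = restrict \<gamma> {..<Suc n}"
    have "\<beta> i = \<gamma> i" for i
    proof (cases "i \<le> n")
      case True
      then show ?thesis using fun_cong[OF eq, of i] by simp
    qed (use idx in \<open>simp add: multi_idx_def\<close>)
    then show "\<beta> = \<gamma>" ..
  qed
  ultimately have "e \<alpha> = 0"
    using monomials_independent[OF finite_multi_idx] assms(2) by blast
  then show ?thesis
    by (simp add: e_def)
qed

lemma has_bernstein_coeffs_unique:
  assumes "has_bernstein_coeffs n k b F" "has_bernstein_coeffs n k b' F" "\<alpha> \<in> multi_idx n k"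
  shows "b \<alpha> = b' \<alpha>"
proof -
  have "(\<Sum>\<alpha>\<in>multi_idx n k. (b \<alpha> - b' \<alpha>) * bernstein n k \<alpha> x) = 0" for x
    using assms(1,2) by (simp add: has_bernstein_coeffs_def left_diff_distrib sum_subtractf)
  from bernstein_basis_independent[OF this assms(3)] show ?thesis
    by simp
qed

lemma bernstein_coeffs_eqI:
  assumes "has_bernstein_coeffs n k b F" "\<alpha> \<in> multi_idx n k"
  shows "bernstein_coeffs n k F \<alpha> = b \<alpha>"
proof -
  define b0 where "b0 \<alpha> = (if \<alpha> \<in> multi_idx n k then b \<alpha> else 0)" for \<alpha>
  have b0: "has_bernstein_coeffs n k b0 F"
    by (rule has_bernstein_coeffs_cong[OF assms(1)]) (simp add: b0_def)
  have "bernstein_coeffs n k F = b0"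
    unfolding bernstein_coeffs_def
  proof (rule the_equality)
    fix b' assume b': "(\<forall>\<alpha>. \<alpha> \<notin> multi_idx n k \<longrightarrow> b' \<alpha> = 0) \<and>
      (\<forall>x. F x = (\<Sum>\<alpha>\<in>multi_idx n k. b' \<alpha> * bernstein n k \<alpha> x))"
    then have "has_bernstein_coeffs n k b' F"
      by (simp add: has_bernstein_coeffs_def)
    have "b' \<alpha> = b0 \<alpha>" for \<alpha>
      using has_bernstein_coeffs_unique[OF \<open>has_bernstein_coeffs n k b' F\<close> b0, of \<alpha>] b'
      by (cases "\<alpha> \<in> multi_idx n k") (simp_all add: b0_def)
    then show "b' = b0" ..
  qed (use b0 in \<open>simp add: has_bernstein_coeffs_def b0_def\<close>)
  with assms(2) show ?thesis
    by (simp add: b0_def)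
qed

lemma has_bernstein_coeffs_bernstein_coeffs:
  assumes "poly_deg_le n l p" "l \<le> k"
  shows "has_bernstein_coeffs n k (bernstein_coeffs n k p) p"
proof -
  obtain c where "\<And>x. p x = (\<Sum>\<beta>\<in>monomial_exps n l. c \<beta> * (\<Prod>i=1..n. x i ^ \<beta> i))"
    using assms(1) by (auto simp: poly_deg_le_def)
  note p = has_bernstein_coeffs_poly[OF this assms(2)]
  then show ?thesis
    by (rule has_bernstein_coeffs_cong) (simp add: bernstein_coeffs_eqI[OF p])
qed

section \<open>Bernstein coefficients approximate values on the grid\<close>

lemma falling_fact_div_power_approx:
  assumes "a \<le> k" "g \<le> k" "0 < k"
  shows "\<bar>falling_fact a g / real k ^ g - (real a / real k) ^ g\<bar> \<le> real g * real g / real k"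
    and "\<bar>falling_fact a g / real k ^ g\<bar> \<le> 1"
proof -
  have ff: "falling_fact a g / real k ^ g = (\<Prod>s<g. (real a - real s) / real k)"
    by (simp add: falling_fact_def prod_dividef)
  have factor_le_1: "\<bar>(real a - real s) / real k\<bar> \<le> 1" if "s < g" for s
    using assms that by (auto simp: abs_le_iff field_simps)
  have "\<bar>falling_fact a g / real k ^ g - (real a / real k) ^ g\<bar> \<le>
      (\<Sum>s<g. \<bar>(real a - real s) / real k - real a / real k\<bar>)"
    unfolding ff using norm_prod_diff[of "{..<g}" "\<lambda>s. (real a - real s) / real k" "\<lambda>_. real a / real k"]
    using factor_le_1 assms by (simp add: divide_le_eq_1)
  also have "\<dots> \<le> (\<Sum>s<g. real g / real k)"
    by (intro sum_mono) (simp add: diff_divide_distrib divide_right_mono)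
  finally show "\<bar>falling_fact a g / real k ^ g - (real a / real k) ^ g\<bar> \<le> real g * real g / real k"
    by simp
  show "\<bar>falling_fact a g / real k ^ g\<bar> \<le> 1"
    unfolding ff abs_prod using factor_le_1 by (intro prod_le_1) auto
qed

lemma prod_falling_fact_approx:
  assumes "\<alpha> \<in> multi_idx n k" "m = (\<Sum>i=0..n. \<beta> i)" "m \<le> k" "0 < k"
  shows "\<bar>(\<Prod>i=0..n. falling_fact (\<alpha> i) (\<beta> i) / real k ^ \<beta> i) -
      (\<Prod>i=0..n. (real (\<alpha> i) / real k) ^ \<beta> i)\<bar> \<le> real m * real m / real k"
proof -
  have \<beta>: "\<beta> i \<le> m" if "i \<in> {0..n}" for i
    using member_le_sum[of i "{0..n}" \<beta>] that assms(2) by auto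
  have factor_approx: "\<bar>falling_fact (\<alpha> i) (\<beta> i) / real k ^ \<beta> i - (real (\<alpha> i) / real k) ^ \<beta> i\<bar>
      \<le> real (\<beta> i) * real m / real k" if "i \<in> {0..n}" for i
  proof -
    have "\<bar>falling_fact (\<alpha> i) (\<beta> i) / real k ^ \<beta> i - (real (\<alpha> i) / real k) ^ \<beta> i\<bar>
        \<le> real (\<beta> i) * real (\<beta> i) / real k"
      using multi_idx_le[OF assms(1)] \<beta>[OF that] assms(3,4)
      by (intro falling_fact_div_power_approx(1)) auto
    also have "\<dots> \<le> real (\<beta> i) * real m / real k"
      using \<beta>[OF that] by (intro divide_right_mono mult_left_mono) auto
    finally show ?thesis .
  qed
  have "\<bar>falling_fact (\<alpha> i) (\<beta> i) / real k ^ \<beta> i\<bar> \<le> 1" if "i \<in> {0..n}" for i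
    using \<beta>[OF that] assms(3,4) multi_idx_le[OF assms(1)] by (intro falling_fact_div_power_approx(2)) auto
  moreover have "\<bar>(real (\<alpha> i) / real k) ^ \<beta> i\<bar> \<le> 1" for i
    unfolding power_abs using multi_idx_le[OF assms(1), of i] assms(4)
    by (intro power_le_one) (auto simp: divide_le_eq_1)
  ultimately have "\<bar>(\<Prod>i=0..n. falling_fact (\<alpha> i) (\<beta> i) / real k ^ \<beta> i) -
      (\<Prod>i=0..n. (real (\<alpha> i) / real k) ^ \<beta> i)\<bar> \<le>
      (\<Sum>i=0..n. \<bar>falling_fact (\<alpha> i) (\<beta> i) / real k ^ \<beta> i - (real (\<alpha> i) / real k) ^ \<beta> i\<bar>)"
    using norm_prod_diff[of "{0..n}" "\<lambda>i. falling_fact (\<alpha> i) (\<beta> i) / real k ^ \<beta> i"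
        "\<lambda>i. (real (\<alpha> i) / real k) ^ \<beta> i"] by simp
  also have "\<dots> \<le> (\<Sum>i=0..n. real (\<beta> i) * real m / real k)"
    by (intro sum_mono factor_approx)
  also have "\<dots> = real m * real m / real k"
    by (simp add: assms(2) sum_divide_distrib[symmetric] sum_distrib_right[symmetric])
  finally show ?thesis .
qed

lemma monomial_bernstein_coeff_approx:
  assumes "\<alpha> \<in> multi_idx n k" "(\<Sum>i=0..n. \<beta> i) \<le> l" "0 < k" "2 * l * l \<le> k"
  shows "\<bar>monomial_bernstein_coeff n \<beta> k \<alpha> - (\<Prod>i=0..n. (real (\<alpha> i) / real k) ^ \<beta> i)\<bar>
    \<le> 4 * real l * real l / real k"
proof -
  define m where "m = (\<Sum>i=0..n. \<beta> i)"
  define P1 where "P1 = (\<Prod>i=0..n. falling_fact (\<alpha> i) (\<beta> i) / real k ^ \<beta> i)"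
  define P0 where "P0 = (\<Prod>i=0..n. (real (\<alpha> i) / real k) ^ \<beta> i)"
  define \<rho> where "\<rho> = falling_fact k m / real k ^ m"
  define \<epsilon> where "\<epsilon> = real l * real l / real k"
  have "m \<le> l" "l \<le> k"
    using assms(2,4) by (auto simp: m_def intro: order_trans[OF _ assms(4)])
  then have "m \<le> k" and m_\<epsilon>: "real m * real m / real k \<le> \<epsilon>"
    by (auto simp: \<epsilon>_def intro!: divide_right_mono mult_mono)
  have \<epsilon>: "\<epsilon> \<le> 1 / 2"
    using assms(3,4) by (simp add: \<epsilon>_def field_simps flip: of_nat_mult)
  have P1_P0: "\<bar>P1 - P0\<bar> \<le> \<epsilon>"
    using prod_falling_fact_approx[OF assms(1) m_def \<open>m \<le> k\<close> assms(3)] m_\<epsilon> by (simp add: P1_def P0_def)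
  have \<rho>_1: "\<bar>\<rho> - 1\<bar> \<le> \<epsilon>"
    using falling_fact_div_power_approx(1)[of k k m] \<open>m \<le> k\<close> assms(3) m_\<epsilon> by (simp add: \<rho>_def)
  with \<epsilon> have \<rho>: "1 / 2 \<le> \<rho>"
    by (simp add: abs_le_iff)
  have "\<bar>P0\<bar> \<le> 1"
    unfolding P0_def abs_prod power_abs using multi_idx_le[OF assms(1)] assms(3)
    by (auto intro!: prod_le_1 power_le_one simp: divide_le_eq_1)
  then have "\<bar>P0\<bar> * \<bar>\<rho> - 1\<bar> \<le> \<epsilon>"
    using mult_mono[OF _ \<rho>_1, of "\<bar>P0\<bar>" 1] by simp
  have "monomial_bernstein_coeff n \<beta> k \<alpha> = P1 / \<rho>"
    using assms(3) by (simp add: monomial_bernstein_coeff_def P1_def \<rho>_def m_def prod_dividef power_sum)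
  then have "monomial_bernstein_coeff n \<beta> k \<alpha> - P0 = ((P1 - P0) - P0 * (\<rho> - 1)) / \<rho>"
    using \<rho> by (simp add: field_simps)
  then have "\<bar>monomial_bernstein_coeff n \<beta> k \<alpha> - P0\<bar> = \<bar>(P1 - P0) - P0 * (\<rho> - 1)\<bar> / \<rho>"
    using \<rho> by (simp add: abs_divide)
  also have "\<dots> \<le> (\<bar>P1 - P0\<bar> + \<bar>P0\<bar> * \<bar>\<rho> - 1\<bar>) / \<rho>"
    using \<rho> by (intro divide_right_mono) (auto simp: abs_mult intro: abs_triangle_ineq4[THEN order_trans])
  also have "\<dots> \<le> (\<epsilon> + \<epsilon>) / (1 / 2)"
    using P1_P0 \<open>\<bar>P0\<bar> * \<bar>\<rho> - 1\<bar> \<le> \<epsilon>\<close> \<rho> by (intro frac_le) auto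
  finally show ?thesis
    by (simp add: P0_def \<epsilon>_def)
qed

section \<open>Positivity on the simplex\<close>

text \<open>\<^const>\<open>std_simplex\<close> leaves the coordinates outside \<open>{1..n}\<close> free, so it is not compact;
  this copy of it, with those coordinates set to \<open>0\<close>, is.\<close>
definition simplex_core :: "nat \<Rightarrow> (nat \<Rightarrow> real) set" where
  "simplex_core n = Pi UNIV (\<lambda>i. if i \<in> {1..n} then {0..1} else {0}) \<inter> {x. (\<Sum>i=1..n. x i) \<le> 1}"

lemma compact_simplex_core: "compact (simplex_core n)"
proof -
  have "compactin (product_topology (\<lambda>_. euclidean) UNIV)
      (PiE UNIV (\<lambda>i::nat. if i \<in> {1..n} then {0..1::real} else {0}))"
    by (subst compactin_PiE) auto
  then have "compact (Pi UNIV (\<lambda>i::nat. if i \<in> {1..n} then {0..1::real} else {0}))"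
    by (simp add: euclidean_product_topology PiE_UNIV_domain)
  moreover have "closed {x::nat \<Rightarrow> real. (\<Sum>i=1..n. x i) \<le> 1}"
    by (intro closed_Collect_le continuous_intros continuous_on_product_coordinates)
  ultimately show ?thesis
    unfolding simplex_core_def by (rule compact_Int_closed)
qed

lemma simplex_core_subset: "simplex_core n \<subseteq> std_simplex n"
proof
  fix x assume x: "x \<in> simplex_core n"
  then have "x i \<in> {0..1}" if "i \<in> {1..n}" for i
    using that Pi_mem[of x UNIV "\<lambda>i. if i \<in> {1..n} then {0..1} else {0}" i]
    by (simp add: simplex_core_def)
  with x show "x \<in> std_simplex n"
    by (auto simp: simplex_core_def std_simplex_def)
qed

lemma poly_lower_bound_on_simplex:
  assumes "\<And>x. p x = (\<Sum>\<beta>\<in>M. c \<beta> * (\<Prod>i=1..n. x i ^ \<beta> i))" "\<forall>x\<in>std_simplex n. 0 < p x"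
  obtains \<delta> where "0 < \<delta>" "\<forall>x\<in>simplex_core n. \<delta> \<le> p x"
proof -
  have "(\<lambda>_. 0) \<in> simplex_core n"
    by (simp add: simplex_core_def)
  moreover have "continuous_on S (\<lambda>x::nat \<Rightarrow> real. x i)" for S i
    by (rule continuous_on_subset[OF continuous_on_product_coordinates]) simp
  then have "continuous_on (simplex_core n) p"
    unfolding assms(1)[abs_def] by (intro continuous_intros)
  ultimately obtain x0 where "x0 \<in> simplex_core n" "\<forall>x\<in>simplex_core n. p x0 \<le> p x"
    using continuous_attains_inf[OF compact_simplex_core] by blast
  with assms(2) simplex_core_subset that show ?thesis
    by blast
qed

definition grid_point :: "nat \<Rightarrow> nat \<Rightarrow> (nat \<Rightarrow> nat) \<Rightarrow> nat \<Rightarrow> real" where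
  "grid_point n k \<alpha> i = (if i \<in> {1..n} then real (\<alpha> i) / real k else 0)"

lemma grid_point_in_simplex_core:
  assumes "\<alpha> \<in> multi_idx n k" "0 < k"
  shows "grid_point n k \<alpha> \<in> simplex_core n"
proof -
  have "(\<Sum>i=1..n. grid_point n k \<alpha> i) = (\<Sum>i=1..n. real (\<alpha> i)) / real k"
    by (simp add: grid_point_def sum_divide_distrib)
  also have "(\<Sum>i=1..n. real (\<alpha> i)) \<le> (\<Sum>i=0..n. real (\<alpha> i))"
    by (intro sum_mono2) auto
  also have "(\<Sum>i=0..n. real (\<alpha> i)) = real k"
    using assms(1) by (simp add: multi_idx_def flip: of_nat_sum)
  finally have "(\<Sum>i=1..n. grid_point n k \<alpha> i) \<le> 1"
    using assms(2) by (simp add: divide_right_mono)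
  moreover have "grid_point n k \<alpha> \<in> Pi UNIV (\<lambda>i. if i \<in> {1..n} then {0..1} else {0})"
    using multi_idx_le[OF assms(1)] assms(2) by (simp add: grid_point_def divide_le_eq_1)
  ultimately show ?thesis
    by (simp add: simplex_core_def)
qed

lemma bernstein_coeffs_near_value:
  assumes "\<And>x. p x = (\<Sum>\<beta>\<in>monomial_exps n l. c \<beta> * (\<Prod>i=1..n. x i ^ \<beta> i))"
    and "\<alpha> \<in> multi_idx n k" "0 < k" "2 * l * l \<le> k"
  shows "\<bar>bernstein_coeffs n k p \<alpha> - p (grid_point n k \<alpha>)\<bar> \<le>
    (\<Sum>\<beta>\<in>monomial_exps n l. \<bar>c \<beta>\<bar>) * (4 * real l * real l) / real k"
proof -
  define E where "E \<beta> = monomial_bernstein_coeff n \<beta> k \<alpha> - (\<Prod>i=0..n. (real (\<alpha> i) / real k) ^ \<beta> i)" for \<beta>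
  have "l \<le> k"
    using assms(4) by (cases l) auto
  have "(\<Prod>i=1..n. grid_point n k \<alpha> i ^ \<beta> i) = (\<Prod>i=0..n. (real (\<alpha> i) / real k) ^ \<beta> i)"
    if "\<beta> \<in> monomial_exps n l" for \<beta>
    using monomial_exps_D(1)[OF that] by (simp add: grid_point_def prod.atLeast_Suc_atMost)
  then have "bernstein_coeffs n k p \<alpha> - p (grid_point n k \<alpha>) = (\<Sum>\<beta>\<in>monomial_exps n l. c \<beta> * E \<beta>)"
    by (simp add: bernstein_coeffs_eqI[OF has_bernstein_coeffs_poly[OF assms(1) \<open>l \<le> k\<close>] assms(2)]
        assms(1) E_def right_diff_distrib sum_subtractf)
  also have "\<bar>\<dots>\<bar> \<le> (\<Sum>\<beta>\<in>monomial_exps n l. \<bar>c \<beta>\<bar> * (4 * real l * real l / real k))"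
  proof (rule order_trans[OF sum_abs sum_mono])
    fix \<beta> assume "\<beta> \<in> monomial_exps n l"
    then have "\<bar>E \<beta>\<bar> \<le> 4 * real l * real l / real k"
      unfolding E_def using assms(2-4) monomial_exps_D(3) by (intro monomial_bernstein_coeff_approx)
    then show "\<bar>c \<beta> * E \<beta>\<bar> \<le> \<bar>c \<beta>\<bar> * (4 * real l * real l / real k)"
      unfolding abs_mult by (rule mult_left_mono) simp
  qed
  finally show ?thesis
    by (simp add: sum_distrib_right sum_divide_distrib)
qed

lemma bernstein_coeffs_eventually_pos:
  assumes "poly_deg_le n l p" "\<forall>x\<in>std_simplex n. 0 < p x"
  obtains K where "\<And>k \<alpha>. K \<le> k \<Longrightarrow> \<alpha> \<in> multi_idx n k \<Longrightarrow> 0 < bernstein_coeffs n k p \<alpha>"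
proof -
  obtain c where p: "\<And>x. p x = (\<Sum>\<beta>\<in>monomial_exps n l. c \<beta> * (\<Prod>i=1..n. x i ^ \<beta> i))"
    using assms(1) by (auto simp: poly_deg_le_def)
  obtain \<delta> where "0 < \<delta>" and \<delta>: "\<forall>x\<in>simplex_core n. \<delta> \<le> p x"
    using poly_lower_bound_on_simplex[OF p assms(2)] by blast
  define C where "C = (\<Sum>\<beta>\<in>monomial_exps n l. \<bar>c \<beta>\<bar>) * (4 * real l * real l)"
  define K where "K = max (2 * l * l + 1) (nat \<lceil>C / \<delta>\<rceil> + 1)"
  have "0 < bernstein_coeffs n k p \<alpha>" if "K \<le> k" "\<alpha> \<in> multi_idx n k" for k \<alpha>
  proof -
    have "0 < k" "2 * l * l \<le> k"
      using that(1) by (auto simp: K_def)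
    have "C / \<delta> < real k"
      using that(1) by (simp add: K_def) linarith
    then have "C / real k < \<delta>"
      using \<open>0 < \<delta>\<close> \<open>0 < k\<close> by (simp add: field_simps)
    moreover have "\<delta> \<le> p (grid_point n k \<alpha>)"
      using \<delta> grid_point_in_simplex_core[OF that(2) \<open>0 < k\<close>] by blast
    moreover have "\<bar>bernstein_coeffs n k p \<alpha> - p (grid_point n k \<alpha>)\<bar> \<le> C / real k"
      using bernstein_coeffs_near_value[OF p that(2) \<open>0 < k\<close> \<open>2 * l * l \<le> k\<close>] by (simp add: C_def)
    ultimately show ?thesis
      by (simp add: abs_le_iff)
  qed
  with that show ?thesis
    by blast
qed

lemma pos_if_bernstein_coeffs_pos:
  assumes "has_bernstein_coeffs n k b F" "\<forall>\<alpha>\<in>multi_idx n k. 0 < b \<alpha>" "x \<in> std_simplex n"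
  shows "0 < F x"
proof -
  obtain \<alpha> where \<alpha>: "\<alpha> \<in> multi_idx n k" "bernstein n k \<alpha> x \<noteq> 0"
    using sum_bernstein[of n k x] by (metis sum.neutral zero_neq_one)
  have "0 < (\<Sum>\<alpha>\<in>multi_idx n k. b \<alpha> * bernstein n k \<alpha> x)"
    using assms(2) bernstein_nonneg[OF assms(3)] \<alpha>
    by (intro sum_pos2[OF finite_multi_idx \<alpha>(1)]) (auto simp: less_le)
  with assms(1) show ?thesis
    by (simp add: has_bernstein_coeffs_def)
qed

theorem corollary5p4:
  fixes n l :: nat and p q :: "(nat \<Rightarrow> real) \<Rightarrow> real"
  assumes "poly_deg_le n l p" and "poly_deg_le n l q"
    and "\<forall>x\<in>std_simplex n. p x / q x > 0"
    and "\<forall>j\<ge>l. \<forall>\<alpha>\<in>multi_idx n j. bernstein_coeffs n j q \<alpha> > 0"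
  shows "\<exists>k\<ge>l. Min (rat_bernstein_coeffs n k p q ` multi_idx n k) > 0"
proof -
  have "0 < q x" if "x \<in> std_simplex n" for x
    using has_bernstein_coeffs_bernstein_coeffs[OF assms(2) order_refl] assms(4) that
    by (auto intro: pos_if_bernstein_coeffs_pos)
  with assms(3) have "\<forall>x\<in>std_simplex n. 0 < p x"
    by (fastforce simp: zero_less_divide_iff)
  then obtain K where K: "\<And>k \<alpha>. K \<le> k \<Longrightarrow> \<alpha> \<in> multi_idx n k \<Longrightarrow> 0 < bernstein_coeffs n k p \<alpha>"
    using bernstein_coeffs_eventually_pos[OF assms(1)] by blast
  define k where "k = max K l"
  have "\<forall>\<alpha>\<in>multi_idx n k. 0 < rat_bernstein_coeffs n k p q \<alpha>"
    using K[of k] assms(4) by (simp add: k_def rat_bernstein_coeffs_def)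
  then have "Min (rat_bernstein_coeffs n k p q ` multi_idx n k) > 0"
    by (simp add: finite_multi_idx multi_idx_nonempty)
  moreover have "l \<le> k"
    by (simp add: k_def)
  ultimately show ?thesis
    by blast
qed

end
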